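(* Let $\mathbb E$ be a weakly congruence distributive category. Then (1) for every object $X$, every internal group in the fiber $Pt_X\mathbb E$ is trivial, i.e. its underlying split epimorphism $f:A\to X$ is an isomorphism; (2) every object of $\mathbb E$ carrying an internal associative Mal'tsev structure is a subobject of the terminal object (its map to $1$ is a monomorphism).
   Context: A finitely complete category $\mathbb E$ is weakly congruence distributive if for any equivalence relations $R,S,T$ on an object $X$ such that the supremum $R\vee S$ exists among equivalence relations on $X$, the conditions $T\wedge R=\Delta_X$ and $T\wedge S=\Delta_X$ imply $T\wedge(R\vee S)=\Delta_X$, where $\Delta_X$ is the discrete relation. $Pt_X\mathbb E$ is the category of triples $(A,f,s)$, $f:A\to X$, $s:X\to A$, $fs=1_X$, with morphisms commuting with $f$ and $s$; it is finitely complete (products are pullbacks over $X$), with terminal object $(X,1_X,1_X)$. An associative Mal'tsev structure on $X$ is $p:X^3\to X$ with $p(x,y,y)=x=p(y,y,x)$ and $p(x,y,p(z,u,v))=p(p(x,y,z),u,v)$. *)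

theory Defs
  imports Main
begin

record ('o,'a) cat =
  Ob :: "'o set"
  Ar :: "'a set"
  Dom :: "'a \<Rightarrow> 'o"
  Cod :: "'a \<Rightarrow> 'o"
  Id :: "'o \<Rightarrow> 'a"
  Comp :: "'a \<Rightarrow> 'a \<Rightarrow> 'a"   (* Comp C g f = g \<circ> f *)

definition category :: "('o,'a) cat \<Rightarrow> bool" where
  "category C \<longleftrightarrow>
     (\<forall>f\<in>Ar C. Dom C f \<in> Ob C \<and> Cod C f \<in> Ob C) \<and>
     (\<forall>x\<in>Ob C. Id C x \<in> Ar C \<and> Dom C (Id C x) = x \<and> Cod C (Id C x) = x) \<and>
     (\<forall>f\<in>Ar C. \<forall>g\<in>Ar C. Cod C f = Dom C g \<longrightarrow>
        Comp C g f \<in> Ar C \<and> Dom C (Comp C g f) = Dom C f \<and> Cod C (Comp C g f) = Cod C g) \<and>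
     (\<forall>f\<in>Ar C. \<forall>g\<in>Ar C. \<forall>h\<in>Ar C. Cod C f = Dom C g \<longrightarrow> Cod C g = Dom C h \<longrightarrow>
        Comp C h (Comp C g f) = Comp C (Comp C h g) f) \<and>
     (\<forall>f\<in>Ar C. Comp C f (Id C (Dom C f)) = f \<and> Comp C (Id C (Cod C f)) f = f)"

definition hom :: "('o,'a) cat \<Rightarrow> 'o \<Rightarrow> 'o \<Rightarrow> 'a set" where
  "hom C x y = {f \<in> Ar C. Dom C f = x \<and> Cod C f = y}"

definition mono :: "('o,'a) cat \<Rightarrow> 'a \<Rightarrow> bool" where
  "mono C m \<longleftrightarrow> m \<in> Ar C \<and>
     (\<forall>a\<in>Ar C. \<forall>b\<in>Ar C. Dom C a = Dom C b \<longrightarrow> Cod C a = Dom C m \<longrightarrow> Cod C b = Dom C m \<longrightarrow>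
        Comp C m a = Comp C m b \<longrightarrow> a = b)"

definition iso :: "('o,'a) cat \<Rightarrow> 'a \<Rightarrow> bool" where
  "iso C f \<longleftrightarrow> f \<in> Ar C \<and>
     (\<exists>g \<in> hom C (Cod C f) (Dom C f). Comp C g f = Id C (Dom C f) \<and> Comp C f g = Id C (Cod C f))"

definition terminal :: "('o,'a) cat \<Rightarrow> 'o \<Rightarrow> bool" where
  "terminal C T \<longleftrightarrow> T \<in> Ob C \<and> (\<forall>x\<in>Ob C. \<exists>!f. f \<in> hom C x T)"

definition bang :: "('o,'a) cat \<Rightarrow> 'o \<Rightarrow> 'o \<Rightarrow> 'a" where
  "bang C T x = (THE f. f \<in> hom C x T)"

definition pullback :: "('o,'a) cat \<Rightarrow> 'a \<Rightarrow> 'a \<Rightarrow> 'o \<Rightarrow> 'a \<Rightarrow> 'a \<Rightarrow> bool" where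
  "pullback C f g P p q \<longleftrightarrow> f \<in> Ar C \<and> g \<in> Ar C \<and> Cod C f = Cod C g \<and> P \<in> Ob C \<and>
     p \<in> hom C P (Dom C f) \<and> q \<in> hom C P (Dom C g) \<and> Comp C f p = Comp C g q \<and>
     (\<forall>Z\<in>Ob C. \<forall>a\<in>hom C Z (Dom C f). \<forall>b\<in>hom C Z (Dom C g). Comp C f a = Comp C g b \<longrightarrow>
        (\<exists>!u. u \<in> hom C Z P \<and> Comp C p u = a \<and> Comp C q u = b))"

definition finitely_complete :: "('o,'a) cat \<Rightarrow> bool" where
  "finitely_complete C \<longleftrightarrow> category C \<and> (\<exists>T. terminal C T) \<and>
     (\<forall>f\<in>Ar C. \<forall>g\<in>Ar C. Cod C f = Cod C g \<longrightarrow> (\<exists>P p q. pullback C f g P p q))"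

definition product :: "('o,'a) cat \<Rightarrow> 'o \<Rightarrow> 'o \<Rightarrow> 'o \<Rightarrow> 'a \<Rightarrow> 'a \<Rightarrow> bool" where
  "product C x y P p1 p2 \<longleftrightarrow> P \<in> Ob C \<and> p1 \<in> hom C P x \<and> p2 \<in> hom C P y \<and>
     (\<forall>Z\<in>Ob C. \<forall>a\<in>hom C Z x. \<forall>b\<in>hom C Z y.
        (\<exists>!u. u \<in> hom C Z P \<and> Comp C p1 u = a \<and> Comp C p2 u = b))"

definition pairing :: "('o,'a) cat \<Rightarrow> 'o \<Rightarrow> 'a \<Rightarrow> 'a \<Rightarrow> 'a \<Rightarrow> 'a \<Rightarrow> 'a" where
  "pairing C P p1 p2 a b = (THE u. u \<in> hom C (Dom C a) P \<and> Comp C p1 u = a \<and> Comp C p2 u = b)"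

definition triple_product ::
  "('o,'a) cat \<Rightarrow> 'o \<Rightarrow> 'o \<Rightarrow> 'a \<Rightarrow> 'a \<Rightarrow> 'a \<Rightarrow> bool" where
  "triple_product C X Q q1 q2 q3 \<longleftrightarrow> Q \<in> Ob C \<and> q1 \<in> hom C Q X \<and> q2 \<in> hom C Q X \<and> q3 \<in> hom C Q X \<and>
     (\<forall>Z\<in>Ob C. \<forall>a\<in>hom C Z X. \<forall>b\<in>hom C Z X. \<forall>c\<in>hom C Z X.
        (\<exists>!u. u \<in> hom C Z Q \<and> Comp C q1 u = a \<and> Comp C q2 u = b \<and> Comp C q3 u = c))"

definition tpairing :: "('o,'a) cat \<Rightarrow> 'o \<Rightarrow> 'a \<Rightarrow> 'a \<Rightarrow> 'a \<Rightarrow> 'a \<Rightarrow> 'a \<Rightarrow> 'a \<Rightarrow> 'a" where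
  "tpairing C Q q1 q2 q3 a b c =
     (THE u. u \<in> hom C (Dom C a) Q \<and> Comp C q1 u = a \<and> Comp C q2 u = b \<and> Comp C q3 u = c)"

definition internal_group ::
  "('o,'a) cat \<Rightarrow> 'o \<Rightarrow> 'o \<Rightarrow> 'o \<Rightarrow> 'a \<Rightarrow> 'a \<Rightarrow> 'a \<Rightarrow> 'a \<Rightarrow> 'a \<Rightarrow> bool" where
  "internal_group C G T P p1 p2 m e i \<longleftrightarrow>
     category C \<and> G \<in> Ob C \<and> terminal C T \<and> product C G G P p1 p2 \<and>
     m \<in> hom C P G \<and> e \<in> hom C T G \<and> i \<in> hom C G G \<and>
     (\<forall>Z\<in>Ob C. \<forall>x\<in>hom C Z G. \<forall>y\<in>hom C Z G. \<forall>z\<in>hom C Z G.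
        (let mul = (\<lambda>a b. Comp C m (pairing C P p1 p2 a b));
             u = Comp C e (bang C T Z)
         in mul (mul x y) z = mul x (mul y z) \<and>
            mul u x = x \<and> mul x u = x \<and>
            mul x (Comp C i x) = u \<and> mul (Comp C i x) x = u))"

definition pt_cat :: "('o,'a) cat \<Rightarrow> 'o \<Rightarrow>
    ('o \<times> 'a \<times> 'a, ('o \<times> 'a \<times> 'a) \<times> ('o \<times> 'a \<times> 'a) \<times> 'a) cat" where
  "pt_cat C X =
    \<lparr> Ob = {(A,f,s). A \<in> Ob C \<and> f \<in> hom C A X \<and> s \<in> hom C X A \<and> Comp C f s = Id C X},
      Ar = {(a,b,h). a \<in> {(A,f,s). A \<in> Ob C \<and> f \<in> hom C A X \<and> s \<in> hom C X A \<and> Comp C f s = Id C X}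
                    \<and> b \<in> {(A,f,s). A \<in> Ob C \<and> f \<in> hom C A X \<and> s \<in> hom C X A \<and> Comp C f s = Id C X}
                    \<and> h \<in> hom C (fst a) (fst b)
                    \<and> Comp C (fst (snd b)) h = fst (snd a)
                    \<and> Comp C h (snd (snd a)) = snd (snd b)},
      Dom = (\<lambda>(a,b,h). a),
      Cod = (\<lambda>(a,b,h). b),
      Id = (\<lambda>a. (a, a, Id C (fst a))),
      Comp = (\<lambda>(b,c,k) (a,b',h). (a, c, Comp C k h)) \<rparr>"

definition relation :: "('o,'a) cat \<Rightarrow> 'o \<Rightarrow> 'a \<times> 'a \<Rightarrow> bool" where
  "relation C X r \<longleftrightarrow> X \<in> Ob C \<and> fst r \<in> hom C (Dom C (fst r)) X \<and> snd r \<in> hom C (Dom C (fst r)) X \<and>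
     (\<forall>a\<in>Ar C. \<forall>b\<in>Ar C. Dom C a = Dom C b \<longrightarrow> Cod C a = Dom C (fst r) \<longrightarrow> Cod C b = Dom C (fst r) \<longrightarrow>
        Comp C (fst r) a = Comp C (fst r) b \<longrightarrow> Comp C (snd r) a = Comp C (snd r) b \<longrightarrow> a = b)"

definition rel_le :: "('o,'a) cat \<Rightarrow> 'a \<times> 'a \<Rightarrow> 'a \<times> 'a \<Rightarrow> bool" where
  "rel_le C r s \<longleftrightarrow> (\<exists>h \<in> hom C (Dom C (fst r)) (Dom C (fst s)).
      Comp C (fst s) h = fst r \<and> Comp C (snd s) h = snd r)"

definition diag :: "('o,'a) cat \<Rightarrow> 'o \<Rightarrow> 'a \<times> 'a" where
  "diag C X = (Id C X, Id C X)"

definition equiv_rel :: "('o,'a) cat \<Rightarrow> 'o \<Rightarrow> 'a \<times> 'a \<Rightarrow> bool" where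
  "equiv_rel C X r \<longleftrightarrow> relation C X r \<and>
     rel_le C (diag C X) r \<and>
     rel_le C (snd r, fst r) r \<and>
     (\<forall>P p q. pullback C (snd r) (fst r) P p q \<longrightarrow>
        rel_le C (Comp C (fst r) p, Comp C (snd r) q) r)"

definition rel_meet :: "('o,'a) cat \<Rightarrow> 'o \<Rightarrow> 'a \<times> 'a \<Rightarrow> 'a \<times> 'a \<Rightarrow> 'a \<times> 'a \<Rightarrow> bool" where
  "rel_meet C X t r d \<longleftrightarrow> relation C X d \<and> rel_le C d t \<and> rel_le C d r \<and>
     (\<forall>u. relation C X u \<and> rel_le C u t \<and> rel_le C u r \<longrightarrow> rel_le C u d)"

definition equiv_sup :: "('o,'a) cat \<Rightarrow> 'o \<Rightarrow> 'a \<times> 'a \<Rightarrow> 'a \<times> 'a \<Rightarrow> 'a \<times> 'a \<Rightarrow> bool" where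
  "equiv_sup C X r s j \<longleftrightarrow> equiv_rel C X j \<and> rel_le C r j \<and> rel_le C s j \<and>
     (\<forall>e. equiv_rel C X e \<and> rel_le C r e \<and> rel_le C s e \<longrightarrow> rel_le C j e)"

definition weakly_cong_distributive :: "('o,'a) cat \<Rightarrow> bool" where
  "weakly_cong_distributive C \<longleftrightarrow> finitely_complete C \<and>
     (\<forall>X\<in>Ob C. \<forall>r s t j. equiv_rel C X r \<and> equiv_rel C X s \<and> equiv_rel C X t \<and>
        equiv_sup C X r s j \<and> rel_meet C X t r (diag C X) \<and> rel_meet C X t s (diag C X)
        \<longrightarrow> rel_meet C X t j (diag C X))"

definition assoc_maltsev :: "('o,'a) cat \<Rightarrow> 'o \<Rightarrow> 'o \<Rightarrow> 'a \<Rightarrow> 'a \<Rightarrow> 'a \<Rightarrow> 'a \<Rightarrow> bool" where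
  "assoc_maltsev C X Q q1 q2 q3 p \<longleftrightarrow> triple_product C X Q q1 q2 q3 \<and> p \<in> hom C Q X \<and>
     (\<forall>Z\<in>Ob C. \<forall>x\<in>hom C Z X. \<forall>y\<in>hom C Z X. \<forall>z\<in>hom C Z X. \<forall>u\<in>hom C Z X. \<forall>v\<in>hom C Z X.
        (let P3 = (\<lambda>a b c. Comp C p (tpairing C Q q1 q2 q3 a b c))
         in P3 x y y = x \<and> P3 y y x = x \<and> P3 x y (P3 z u v) = P3 (P3 x y z) u v))"

end

theory Submission
  imports Defs
begin

text \<open>
  The engine is a monicity criterion: let \<open>a, b, d, g\<close> be arrows out of \<open>W\<close> whose kernel
  pairs satisfy \<open>Eq(a), Eq(b), Eq(d) \<le> Eq(g) \<le> Eq(a) \<circ> Eq(b)\<close> and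
  \<open>Eq(d) \<and> Eq(a) = Eq(d) \<and> Eq(b) = \<Delta>\<close>. Then \<open>Eq(g)\<close> is the supremum of \<open>Eq(a)\<close> and
  \<open>Eq(b)\<close> among equivalence relations, so weak congruence distributivity gives
  \<open>Eq(d) = Eq(d) \<and> Eq(g) = \<Delta>\<close>, i.e. \<open>d\<close> is monic.

  For an internal group \<open>(A, f, s)\<close> in \<open>Pt\<^sub>X\<close>, take for \<open>W\<close> the kernel pair of \<open>f\<close> (the square
  of the group in \<open>Pt\<^sub>X\<close>), \<open>a, b\<close> its projections, \<open>g\<close> its map to \<open>X\<close> and \<open>d\<close> the division
  \<open>(x, y) \<mapsto> x y\<^sup>-\<^sup>1\<close>; each of \<open>x\<close>, \<open>y\<close> is recovered from the other and \<open>x y\<^sup>-\<^sup>1\<close>. The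
  division sends both the diagonal of \<open>A\<close> and \<open>(s f, s f)\<close> to the unit, so these agree and
  \<open>s f = 1\<close>. For an associative Mal'tsev operation \<open>p\<close> on \<open>X\<close>, take \<open>W = X\<^sup>3\<close>,
  \<open>a = (x, y)\<close>, \<open>b = (x, z)\<close>, \<open>g = x\<close> and \<open>d = (x, p(y, z, x))\<close>; then
  \<open>d(x, x, x) = d(x, y, y)\<close> forces \<open>x = y\<close> for all generalized elements, so \<open>X \<rightarrow> 1\<close> is monic.
\<close>

lemma in_hom_iff: "f \<in> hom C x y \<longleftrightarrow> f \<in> Ar C \<and> Dom C f = x \<and> Cod C f = y"
  by (simp add: hom_def)

lemma hom_objects: "category C \<Longrightarrow> f \<in> hom C x y \<Longrightarrow> x \<in> Ob C \<and> y \<in> Ob C"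
  unfolding category_def hom_def by blast

lemma Comp_in_hom: "category C \<Longrightarrow> f \<in> hom C x y \<Longrightarrow> g \<in> hom C y z \<Longrightarrow> Comp C g f \<in> hom C x z"
  unfolding category_def hom_def by auto

lemma Comp_assoc: "category C \<Longrightarrow> f \<in> hom C w x \<Longrightarrow> g \<in> hom C x y \<Longrightarrow> h \<in> hom C y z \<Longrightarrow>
    Comp C h (Comp C g f) = Comp C (Comp C h g) f"
  unfolding category_def hom_def by auto

lemma Id_in_hom: "category C \<Longrightarrow> x \<in> Ob C \<Longrightarrow> Id C x \<in> hom C x x"
  unfolding category_def hom_def by auto

lemma Comp_Id_left: "category C \<Longrightarrow> f \<in> hom C x y \<Longrightarrow> Comp C (Id C y) f = f"
  unfolding category_def hom_def by auto

lemma Comp_Id_right: "category C \<Longrightarrow> f \<in> hom C x y \<Longrightarrow> Comp C f (Id C x) = f"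
  unfolding category_def hom_def by auto

lemma bang_in_hom:
  assumes "terminal C T" "x \<in> Ob C"
  shows "bang C T x \<in> hom C x T"
proof -
  have "\<exists>!f. f \<in> hom C x T" using assms unfolding terminal_def by blast
  then show ?thesis unfolding bang_def by (rule theI')
qed

lemma pullback_in_hom:
  assumes "pullback C f g P p q" "f \<in> hom C A Y" "g \<in> hom C B Y"
  shows "P \<in> Ob C" "p \<in> hom C P A" "q \<in> hom C P B" "Comp C f p = Comp C g q"
proof -
  have "P \<in> Ob C \<and> p \<in> hom C P (Dom C f) \<and> q \<in> hom C P (Dom C g) \<and> Comp C f p = Comp C g q"
    using assms(1) unfolding pullback_def by blast
  then show "P \<in> Ob C" "p \<in> hom C P A" "q \<in> hom C P B" "Comp C f p = Comp C g q"
    using assms(2,3) by (auto simp: in_hom_iff)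
qed

lemma pullback_universal:
  assumes "pullback C f g P p q" "f \<in> hom C A Y" "g \<in> hom C B Y"
    and "Z \<in> Ob C" "a \<in> hom C Z A" "b \<in> hom C Z B" "Comp C f a = Comp C g b"
  shows "\<exists>!u. u \<in> hom C Z P \<and> Comp C p u = a \<and> Comp C q u = b"
proof -
  have "Dom C f = A" "Dom C g = B" using assms(2,3) by (simp_all add: in_hom_iff)
  then show ?thesis using assms(1,4-7) unfolding pullback_def by blast
qed

lemma pullback_pairing:
  assumes "category C" "pullback C f g P p q" "f \<in> hom C A Y" "g \<in> hom C B Y"
    and "a \<in> hom C Z A" "b \<in> hom C Z B" "Comp C f a = Comp C g b"
  shows "pairing C P p q a b \<in> hom C Z P" "Comp C p (pairing C P p q a b) = a"
    "Comp C q (pairing C P p q a b) = b"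
proof -
  have "Z \<in> Ob C" "Dom C a = Z" using hom_objects[OF assms(1,5)] assms(5) by (auto simp: in_hom_iff)
  from theI'[OF pullback_universal[OF assms(2-4) this(1) assms(5-7)]] this(2)
  show "pairing C P p q a b \<in> hom C Z P" "Comp C p (pairing C P p q a b) = a"
    "Comp C q (pairing C P p q a b) = b"
    unfolding pairing_def by auto
qed

lemma pullback_arrow_eqI:
  assumes "category C" "pullback C f g P p q" "f \<in> hom C A Y" "g \<in> hom C B Y"
    and "u \<in> hom C Z P" "v \<in> hom C Z P" "Comp C p u = Comp C p v" "Comp C q u = Comp C q v"
  shows "u = v"
proof -
  note P = pullback_in_hom[OF assms(2-4)]
  have "Comp C f (Comp C p u) = Comp C g (Comp C q u)"
    using Comp_assoc[OF assms(1,5) P(2) assms(3)] Comp_assoc[OF assms(1,5) P(3) assms(4)] P(4) by simp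
  moreover have "Z \<in> Ob C" "Comp C p u \<in> hom C Z A" "Comp C q u \<in> hom C Z B"
    using Comp_in_hom[OF assms(1,5)] P hom_objects[OF assms(1,5)] by auto
  ultimately have "\<exists>!w. w \<in> hom C Z P \<and> Comp C p w = Comp C p u \<and> Comp C q w = Comp C q u"
    using pullback_universal[OF assms(2-4)] by blast
  then show ?thesis using assms(5-8) by auto
qed

lemma pullback_exists:
  "finitely_complete C \<Longrightarrow> f \<in> hom C A Y \<Longrightarrow> g \<in> hom C B Y \<Longrightarrow> \<exists>P p q. pullback C f g P p q"
  unfolding finitely_complete_def in_hom_iff by metis

lemma weakly_cong_distributiveD:
  assumes "weakly_cong_distributive C" "X \<in> Ob C"
    and "equiv_rel C X r" "equiv_rel C X s" "equiv_rel C X t" "equiv_sup C X r s j"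
    and "rel_meet C X t r (diag C X)" "rel_meet C X t s (diag C X)"
  shows "rel_meet C X t j (diag C X)"
  using assms unfolding weakly_cong_distributive_def by blast

lemma weakly_cong_distributive_finitely_complete:
  "weakly_cong_distributive C \<Longrightarrow> finitely_complete C"
  unfolding weakly_cong_distributive_def by blast

lemma weakly_cong_distributive_category: "weakly_cong_distributive C \<Longrightarrow> category C"
  using weakly_cong_distributive_finitely_complete unfolding finitely_complete_def by blast

definition related :: "('o,'a) cat \<Rightarrow> 'a \<times> 'a \<Rightarrow> 'a \<Rightarrow> 'a \<Rightarrow> bool" where
  "related C r x y \<longleftrightarrow>
     (\<exists>h \<in> hom C (Dom C x) (Dom C (fst r)). Comp C (fst r) h = x \<and> Comp C (snd r) h = y)"

lemma rel_le_iff_related: "rel_le C r e \<longleftrightarrow> related C e (fst r) (snd r)"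
  unfolding rel_le_def related_def by simp

lemma related_mono:
  assumes "category C" "relation C W e" "rel_le C r e" "related C r x y"
  shows "related C e x y"
proof -
  obtain h where h: "h \<in> hom C (Dom C (fst r)) (Dom C (fst e))"
      "Comp C (fst e) h = fst r" "Comp C (snd e) h = snd r"
    using assms(3) unfolding rel_le_def by auto
  obtain k where k: "k \<in> hom C (Dom C x) (Dom C (fst r))" "Comp C (fst r) k = x" "Comp C (snd r) k = y"
    using assms(4) unfolding related_def by auto
  have e: "fst e \<in> hom C (Dom C (fst e)) W" "snd e \<in> hom C (Dom C (fst e)) W"
    using assms(2) unfolding relation_def by auto
  show ?thesis unfolding related_def
    using Comp_in_hom[OF assms(1) k(1) h(1)] Comp_assoc[OF assms(1) k(1) h(1) e(1)]
      Comp_assoc[OF assms(1) k(1) h(1) e(2)] h k by auto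
qed

lemma related_trans:
  assumes "finitely_complete C" "equiv_rel C W e"
    and "x \<in> hom C Z W" "y \<in> hom C Z W" "z \<in> hom C Z W"
    and "related C e x y" "related C e y z"
  shows "related C e x z"
proof -
  obtain e1 e2 where e: "e = (e1, e2)" by (cases e)
  define E where "E = Dom C e1"
  have cat: "category C" using assms(1) unfolding finitely_complete_def by blast
  have eh: "e1 \<in> hom C E W" "e2 \<in> hom C E W"
    using assms(2) unfolding equiv_rel_def relation_def e E_def by auto
  obtain h1 where h1: "h1 \<in> hom C Z E" "Comp C e1 h1 = x" "Comp C e2 h1 = y"
    using assms(3,6) unfolding related_def e E_def by (auto simp: in_hom_iff)
  obtain h2 where h2: "h2 \<in> hom C Z E" "Comp C e1 h2 = y" "Comp C e2 h2 = z"
    using assms(4,7) unfolding related_def e E_def by (auto simp: in_hom_iff)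
  obtain P p q where pb: "pullback C e2 e1 P p q" using pullback_exists[OF assms(1) eh(2,1)] by blast
  note P = pullback_in_hom[OF pb eh(2,1)]
  define u where "u = pairing C P p q h1 h2"
  have u: "u \<in> hom C Z P" "Comp C p u = h1" "Comp C q u = h2"
    using pullback_pairing[OF cat pb eh(2,1) h1(1) h2(1)] h1 h2 unfolding u_def by auto
  have "rel_le C (Comp C e1 p, Comp C e2 q) e"
    using assms(2) pb unfolding equiv_rel_def e by auto
  moreover have "Dom C (Comp C e1 p) = P" using Comp_in_hom[OF cat P(2) eh(1)] by (simp add: in_hom_iff)
  ultimately obtain k where k: "k \<in> hom C P E" "Comp C e1 k = Comp C e1 p" "Comp C e2 k = Comp C e2 q"
    unfolding rel_le_def e E_def by auto
  have "Comp C e1 (Comp C k u) = x" "Comp C e2 (Comp C k u) = z"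
    using Comp_assoc[OF cat u(1) k(1) eh(1)] Comp_assoc[OF cat u(1) P(2) eh(1)]
      Comp_assoc[OF cat u(1) k(1) eh(2)] Comp_assoc[OF cat u(1) P(3) eh(2)] k u h1 h2 by simp_all
  then show ?thesis unfolding related_def e E_def
    using Comp_in_hom[OF cat u(1) k(1)] assms(3) by (auto simp: in_hom_iff E_def)
qed

lemma relation_diag:
  assumes "category C" "W \<in> Ob C"
  shows "relation C W (diag C W)"
proof -
  have I: "Id C W \<in> hom C W W" using Id_in_hom[OF assms] .
  have "a = b" if "a \<in> hom C Z W" "b \<in> hom C Z W" "Comp C (Id C W) a = Comp C (Id C W) b" for a b Z
    using that Comp_Id_left[OF assms(1)] by metis
  then show ?thesis unfolding relation_def diag_def using I assms(2) by (auto simp: in_hom_iff)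
qed

lemma rel_meet_diagI:
  assumes "category C" "W \<in> Ob C" "equiv_rel C W t" "equiv_rel C W r"
    and "\<And>u. relation C W u \<Longrightarrow> rel_le C u t \<Longrightarrow> rel_le C u r \<Longrightarrow> fst u = snd u"
  shows "rel_meet C W t r (diag C W)"
  unfolding rel_meet_def
proof (intro conjI allI impI)
  show "relation C W (diag C W)" using relation_diag[OF assms(1,2)] .
  show "rel_le C (diag C W) t" "rel_le C (diag C W) r"
    using assms(3,4) unfolding equiv_rel_def by auto
  fix u assume u: "relation C W u \<and> rel_le C u t \<and> rel_le C u r"
  then have "fst u \<in> hom C (Dom C (fst u)) W" "fst u = snd u"
    using assms(5) unfolding relation_def by auto
  then show "rel_le C u (diag C W)"
    unfolding rel_le_def diag_def
    using Comp_Id_left[OF assms(1)] Id_in_hom[OF assms(1,2)] by (intro bexI[of _ "fst u"]) (auto simp: in_hom_iff)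
qed

lemma rel_meet_diagD:
  assumes "rel_meet C W t r (diag C W)" "relation C W u" "rel_le C u t" "rel_le C u r"
  shows "fst u = snd u"
proof -
  have "rel_le C u (diag C W)" using assms unfolding rel_meet_def by blast
  then show ?thesis unfolding rel_le_def diag_def by auto
qed

lemma kernel_pair_related_iff:
  assumes "category C" "pullback C g g K k1 k2" "g \<in> hom C W Y"
    and "x \<in> hom C Z W" "y \<in> hom C Z W"
  shows "related C (k1, k2) x y \<longleftrightarrow> Comp C g x = Comp C g y"
proof
  note K = pullback_in_hom[OF assms(2,3,3)]
  assume "related C (k1, k2) x y"
  then obtain h where "h \<in> hom C Z K" "Comp C k1 h = x" "Comp C k2 h = y"
    using assms(4) K(2) unfolding related_def by (auto simp: in_hom_iff)
  then show "Comp C g x = Comp C g y"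
    using Comp_assoc[OF assms(1) _ K(2) assms(3)] Comp_assoc[OF assms(1) _ K(3) assms(3)] K(4) by metis
next
  assume "Comp C g x = Comp C g y"
  from pullback_pairing[OF assms(1,2,3,3,4,5) this] assms(4) pullback_in_hom[OF assms(2,3,3)]
  show "related C (k1, k2) x y" unfolding related_def by (auto simp: in_hom_iff)
qed

lemma kernel_pair_equiv_rel:
  assumes "category C" "pullback C g g K k1 k2" "g \<in> hom C W Y"
  shows "equiv_rel C W (k1, k2)"
proof -
  note K = pullback_in_hom[OF assms(2,3,3)]
  note related_iff = kernel_pair_related_iff[OF assms]
  have W: "W \<in> Ob C" using hom_objects[OF assms(1,3)] by blast
  have "u = v" if "u \<in> hom C Z K" "v \<in> hom C Z K" "Comp C k1 u = Comp C k1 v" "Comp C k2 u = Comp C k2 v"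
    for u v Z using pullback_arrow_eqI[OF assms(1,2,3,3) that] .
  then have "relation C W (k1, k2)"
    using W K unfolding relation_def in_hom_iff by (metis fst_conv snd_conv)
  moreover have "rel_le C (diag C W) (k1, k2)"
    using related_iff[OF Id_in_hom[OF assms(1) W] Id_in_hom[OF assms(1) W]]
    unfolding rel_le_iff_related diag_def by simp
  moreover have "rel_le C (k2, k1) (k1, k2)"
    using related_iff[OF K(3,2)] K(4) unfolding rel_le_iff_related by simp
  moreover have "rel_le C (Comp C k1 p, Comp C k2 q) (k1, k2)" if pb: "pullback C k2 k1 P p q" for P p q
  proof -
    note PQ = pullback_in_hom[OF pb K(3,2)]
    have "Comp C g (Comp C k1 p) = Comp C g (Comp C k2 q)"
      using Comp_assoc[OF assms(1) PQ(2) _ assms(3)] Comp_assoc[OF assms(1) PQ(3) _ assms(3)]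
        K(2,3,4) PQ(4) by metis
    then show ?thesis
      using related_iff[OF Comp_in_hom[OF assms(1) PQ(2) K(2)] Comp_in_hom[OF assms(1) PQ(3) K(3)]]
      unfolding rel_le_iff_related by simp
  qed
  ultimately show ?thesis unfolding equiv_rel_def by simp
qed

text \<open>
  Tested on generalized elements, these say \<open>Eq(a) \<and> Eq(b) = \<Delta>\<close>, \<open>Eq(a) \<le> Eq(b)\<close> and
  \<open>Eq(g) \<le> Eq(a) \<circ> Eq(b)\<close> for the kernel pairs \<open>Eq(-)\<close>.
\<close>

definition jointly_monic :: "('o,'a) cat \<Rightarrow> 'o \<Rightarrow> 'a \<Rightarrow> 'a \<Rightarrow> bool" where
  "jointly_monic C W a b \<longleftrightarrow> (\<forall>Z u v. u \<in> hom C Z W \<longrightarrow> v \<in> hom C Z W \<longrightarrow>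
     Comp C a u = Comp C a v \<longrightarrow> Comp C b u = Comp C b v \<longrightarrow> u = v)"

definition kernel_le :: "('o,'a) cat \<Rightarrow> 'o \<Rightarrow> 'a \<Rightarrow> 'a \<Rightarrow> bool" where
  "kernel_le C W a b \<longleftrightarrow> (\<forall>Z u v. u \<in> hom C Z W \<longrightarrow> v \<in> hom C Z W \<longrightarrow>
     Comp C a u = Comp C a v \<longrightarrow> Comp C b u = Comp C b v)"

definition kernel_le_relcomp :: "('o,'a) cat \<Rightarrow> 'o \<Rightarrow> 'a \<Rightarrow> 'a \<Rightarrow> 'a \<Rightarrow> bool" where
  "kernel_le_relcomp C W g a b \<longleftrightarrow> (\<forall>Z x y. x \<in> hom C Z W \<longrightarrow> y \<in> hom C Z W \<longrightarrow>
     Comp C g x = Comp C g y \<longrightarrow> (\<exists>c \<in> hom C Z W. Comp C a x = Comp C a c \<and> Comp C b c = Comp C b y))"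

lemma kernel_le_Comp:
  assumes "category C" "d \<in> hom C W A" "h \<in> hom C A B"
  shows "kernel_le C W d (Comp C h d)"
  unfolding kernel_le_def using Comp_assoc[OF assms(1) _ assms(2,3)] by metis

lemma kernel_pair_le:
  assumes "category C" "pullback C a a K k1 k2" "a \<in> hom C W A"
    and "pullback C g g L l1 l2" "g \<in> hom C W Y" "kernel_le C W a g"
  shows "rel_le C (k1, k2) (l1, l2)"
proof -
  note K = pullback_in_hom[OF assms(2,3,3)]
  have "Comp C g k1 = Comp C g k2" using assms(6) K unfolding kernel_le_def by blast
  then show ?thesis using kernel_pair_related_iff[OF assms(1,4,5) K(2,3)]
    unfolding rel_le_iff_related by simp
qed

lemma kernel_pair_equiv_sup:
  assumes fc: "finitely_complete C"
    and a: "pullback C a a Ka a1 a2" "a \<in> hom C W A"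
    and b: "pullback C b b Kb b1 b2" "b \<in> hom C W B"
    and g: "pullback C g g Kg g1 g2" "g \<in> hom C W Y"
    and "kernel_le C W a g" "kernel_le C W b g" "kernel_le_relcomp C W g a b"
  shows "equiv_sup C W (a1, a2) (b1, b2) (g1, g2)"
  unfolding equiv_sup_def
proof (intro conjI allI impI)
  have cat: "category C" using fc unfolding finitely_complete_def by blast
  show "equiv_rel C W (g1, g2)" using kernel_pair_equiv_rel[OF cat g] .
  show "rel_le C (a1, a2) (g1, g2)" using kernel_pair_le[OF cat a g assms(8)] .
  show "rel_le C (b1, b2) (g1, g2)" using kernel_pair_le[OF cat b g assms(9)] .
  fix e assume e: "equiv_rel C W e \<and> rel_le C (a1, a2) e \<and> rel_le C (b1, b2) e"
  then have "relation C W e" unfolding equiv_rel_def by blast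
  note G = pullback_in_hom[OF g(1,2,2)]
  obtain c where c: "c \<in> hom C Kg W" "Comp C a g1 = Comp C a c" "Comp C b c = Comp C b g2"
    using assms(10) G unfolding kernel_le_relcomp_def by blast
  have "related C e g1 c"
    using related_mono[OF cat \<open>relation C W e\<close>] e kernel_pair_related_iff[OF cat a G(2) c(1)] c(2) by blast
  moreover have "related C e c g2"
    using related_mono[OF cat \<open>relation C W e\<close>] e kernel_pair_related_iff[OF cat b c(1) G(3)] c(3) by blast
  ultimately have "related C e g1 g2" using related_trans[OF fc] e G(2,3) c(1) by blast
  then show "rel_le C (g1, g2) e" unfolding rel_le_iff_related by simp
qed

lemma kernel_pair_meet_diag:
  assumes cat: "category C"
    and a: "pullback C a a Ka a1 a2" "a \<in> hom C W A"
    and d: "pullback C d d Kd d1 d2" "d \<in> hom C W D"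
    and "jointly_monic C W a d"
  shows "rel_meet C W (d1, d2) (a1, a2) (diag C W)"
proof (rule rel_meet_diagI[OF cat _ kernel_pair_equiv_rel[OF cat d] kernel_pair_equiv_rel[OF cat a]])
  show "W \<in> Ob C" using hom_objects[OF cat a(2)] by blast
  fix u assume u: "relation C W u" "rel_le C u (d1, d2)" "rel_le C u (a1, a2)"
  have U: "fst u \<in> hom C (Dom C (fst u)) W" "snd u \<in> hom C (Dom C (fst u)) W"
    using u(1) unfolding relation_def by auto
  have "Comp C d (fst u) = Comp C d (snd u)" "Comp C a (fst u) = Comp C a (snd u)"
    using u(2,3) kernel_pair_related_iff[OF cat a U] kernel_pair_related_iff[OF cat d U]
    unfolding rel_le_iff_related by simp_all
  then show "fst u = snd u" using assms(6) U unfolding jointly_monic_def by blast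
qed

theorem weakly_cong_distributive_monoI:
  assumes wcd: "weakly_cong_distributive C"
    and homs: "a \<in> hom C W A" "b \<in> hom C W B" "d \<in> hom C W D" "g \<in> hom C W Y"
    and ad: "jointly_monic C W a d" and bd: "jointly_monic C W b d"
    and ag: "kernel_le C W a g" and bg: "kernel_le C W b g" and dg: "kernel_le C W d g"
    and gab: "kernel_le_relcomp C W g a b"
    and v: "v1 \<in> hom C Z W" "v2 \<in> hom C Z W" "Comp C d v1 = Comp C d v2"
  shows "v1 = v2"
proof -
  note fc = weakly_cong_distributive_finitely_complete[OF wcd]
    and cat = weakly_cong_distributive_category[OF wcd]
  have W: "W \<in> Ob C" using hom_objects[OF cat homs(1)] by blast
  obtain Ka a1 a2 where a: "pullback C a a Ka a1 a2" using pullback_exists[OF fc homs(1,1)] by blast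
  obtain Kb b1 b2 where b: "pullback C b b Kb b1 b2" using pullback_exists[OF fc homs(2,2)] by blast
  obtain Kd d1 d2 where d: "pullback C d d Kd d1 d2" using pullback_exists[OF fc homs(3,3)] by blast
  obtain Kg g1 g2 where g: "pullback C g g Kg g1 g2" using pullback_exists[OF fc homs(4,4)] by blast
  have Ea: "equiv_rel C W (a1, a2)" using kernel_pair_equiv_rel[OF cat a homs(1)] .
  have Eb: "equiv_rel C W (b1, b2)" using kernel_pair_equiv_rel[OF cat b homs(2)] .
  have Ed: "equiv_rel C W (d1, d2)" using kernel_pair_equiv_rel[OF cat d homs(3)] .
  have "equiv_sup C W (a1, a2) (b1, b2) (g1, g2)"
    using kernel_pair_equiv_sup[OF fc a homs(1) b homs(2) g homs(4) ag bg gab] .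
  moreover have "rel_meet C W (d1, d2) (a1, a2) (diag C W)" "rel_meet C W (d1, d2) (b1, b2) (diag C W)"
    using kernel_pair_meet_diag[OF cat a homs(1) d homs(3) ad]
      kernel_pair_meet_diag[OF cat b homs(2) d homs(3) bd] .
  ultimately have "rel_meet C W (d1, d2) (g1, g2) (diag C W)"
    using weakly_cong_distributiveD[OF wcd W Ea Eb Ed] by blast
  moreover have "relation C W (d1, d2)" using Ed unfolding equiv_rel_def by blast
  moreover have "rel_le C (d1, d2) (d1, d2)"
    using kernel_pair_le[OF cat d homs(3) d homs(3)] unfolding kernel_le_def by blast
  moreover have "rel_le C (d1, d2) (g1, g2)"
    using kernel_pair_le[OF cat d homs(3) g homs(4) dg] .
  ultimately have "d1 = d2" using rel_meet_diagD by fastforce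
  moreover obtain h where "Comp C d1 h = v1" "Comp C d2 h = v2"
    using kernel_pair_related_iff[OF cat d homs(3) v(1,2)] v(3) unfolding related_def by auto
  ultimately show ?thesis by simp
qed

locale assoc_maltsev_object =
  fixes C :: "('o,'a) cat" and X Q q1 q2 q3 p
  assumes category: "category C" and assoc_maltsev: "assoc_maltsev C X Q q1 q2 q3 p"
begin

abbreviation tp where "tp \<equiv> tpairing C Q q1 q2 q3"

lemma triple_product: "triple_product C X Q q1 q2 q3"
  using assoc_maltsev unfolding assoc_maltsev_def by blast

lemma projections_in_hom: "q1 \<in> hom C Q X" "q2 \<in> hom C Q X" "q3 \<in> hom C Q X"
  using triple_product unfolding triple_product_def by auto

lemma projections_comp_in_hom:
  assumes "u \<in> hom C Z Q"
  shows "Comp C q1 u \<in> hom C Z X" "Comp C q2 u \<in> hom C Z X" "Comp C q3 u \<in> hom C Z X"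
  using Comp_in_hom[OF category assms] projections_in_hom by auto

lemma tpairing_unique:
  assumes "a \<in> hom C Z X" "b \<in> hom C Z X" "c \<in> hom C Z X"
  shows "\<exists>!u. u \<in> hom C Z Q \<and> Comp C q1 u = a \<and> Comp C q2 u = b \<and> Comp C q3 u = c"
proof -
  have "Z \<in> Ob C" using hom_objects[OF category assms(1)] by blast
  then show ?thesis using triple_product assms unfolding triple_product_def by blast
qed

lemma tpairing:
  assumes "a \<in> hom C Z X" "b \<in> hom C Z X" "c \<in> hom C Z X"
  shows "tp a b c \<in> hom C Z Q" "Comp C q1 (tp a b c) = a" "Comp C q2 (tp a b c) = b"
    "Comp C q3 (tp a b c) = c"
proof -
  have "Dom C a = Z" using assms(1) by (simp add: in_hom_iff)
  from theI'[OF tpairing_unique[OF assms]] this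
  show "tp a b c \<in> hom C Z Q" "Comp C q1 (tp a b c) = a" "Comp C q2 (tp a b c) = b"
    "Comp C q3 (tp a b c) = c"
    unfolding tpairing_def by auto
qed

lemma tpairing_eta:
  assumes "u \<in> hom C Z Q"
  shows "tp (Comp C q1 u) (Comp C q2 u) (Comp C q3 u) = u"
  using tpairing_unique[OF projections_comp_in_hom[OF assms]] tpairing[OF projections_comp_in_hom[OF assms]]
    assms by blast

lemma tpairing_ext:
  assumes "u \<in> hom C Z Q" "v \<in> hom C Z Q"
    and "Comp C q1 u = Comp C q1 v" "Comp C q2 u = Comp C q2 v" "Comp C q3 u = Comp C q3 v"
  shows "u = v"
  using tpairing_eta[OF assms(1)] tpairing_eta[OF assms(2)] assms(3-5) by metis

lemma tpairing_eq_iff: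
  assumes "a \<in> hom C Z X" "b \<in> hom C Z X" "c \<in> hom C Z X"
    and "a' \<in> hom C Z X" "b' \<in> hom C Z X" "c' \<in> hom C Z X"
  shows "tp a b c = tp a' b' c' \<longleftrightarrow> a = a' \<and> b = b' \<and> c = c'"
  using tpairing[OF assms(1-3)] tpairing[OF assms(4-6)] by metis

lemma tpairing_comp:
  assumes "h \<in> hom C Z' Z" "a \<in> hom C Z X" "b \<in> hom C Z X" "c \<in> hom C Z X"
  shows "Comp C (tp a b c) h = tp (Comp C a h) (Comp C b h) (Comp C c h)"
proof -
  note T = tpairing[OF assms(2-4)]
  have "Comp C (tp a b c) h \<in> hom C Z' Q" using Comp_in_hom[OF category assms(1) T(1)] .
  from tpairing_eta[OF this] show ?thesis
    using Comp_assoc[OF category assms(1) T(1)] projections_in_hom T by simp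
qed

definition mal :: "'a \<Rightarrow> 'a \<Rightarrow> 'a \<Rightarrow> 'a" where
  "mal a b c = Comp C p (tp a b c)"

lemma mal_in_hom: "a \<in> hom C Z X \<Longrightarrow> b \<in> hom C Z X \<Longrightarrow> c \<in> hom C Z X \<Longrightarrow> mal a b c \<in> hom C Z X"
  unfolding mal_def using assoc_maltsev
  by (auto simp: assoc_maltsev_def intro: Comp_in_hom[OF category tpairing(1)])

lemma mal_comp:
  assumes "h \<in> hom C Z' Z" "a \<in> hom C Z X" "b \<in> hom C Z X" "c \<in> hom C Z X"
  shows "Comp C (mal a b c) h = mal (Comp C a h) (Comp C b h) (Comp C c h)"
proof -
  have "p \<in> hom C Q X" using assoc_maltsev unfolding assoc_maltsev_def by blast
  then show ?thesis
    unfolding mal_def using Comp_assoc[OF category assms(1) tpairing(1)[OF assms(2-4)]] tpairing_comp[OF assms]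
    by simp
qed

lemma mal_laws:
  assumes "x \<in> hom C Z X" "y \<in> hom C Z X" "z \<in> hom C Z X" "u \<in> hom C Z X" "v \<in> hom C Z X"
  shows "mal x y y = x" "mal y y x = x" "mal x y (mal z u v) = mal (mal x y z) u v"
proof -
  have "Z \<in> Ob C" using hom_objects[OF category assms(1)] by blast
  with assoc_maltsev assms
  show "mal x y y = x" "mal y y x = x" "mal x y (mal z u v) = mal (mal x y z) u v"
    unfolding assoc_maltsev_def mal_def Let_def by blast+
qed

lemma mal_right_cancel: "x \<in> hom C Z X \<Longrightarrow> y \<in> hom C Z X \<Longrightarrow> mal x y y = x"
  using mal_laws(1) by blast

lemma mal_left_cancel: "x \<in> hom C Z X \<Longrightarrow> y \<in> hom C Z X \<Longrightarrow> mal y y x = x"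
  using mal_laws(2) by blast

lemma mal_assoc:
  "x \<in> hom C Z X \<Longrightarrow> y \<in> hom C Z X \<Longrightarrow> z \<in> hom C Z X \<Longrightarrow> u \<in> hom C Z X \<Longrightarrow> v \<in> hom C Z X \<Longrightarrow>
    mal x y (mal z u v) = mal (mal x y z) u v"
  using mal_laws(3) by blast

lemma mal_shift:
  assumes "x \<in> hom C Z X" "y \<in> hom C Z X" "z \<in> hom C Z X"
  shows "mal x y (mal y x z) = z"
  using mal_assoc[OF assms(1,2,2,1,3)] mal_right_cancel[OF assms(1,2)] mal_left_cancel[OF assms(3,1)]
  by simp

lemma mal_middle:
  assumes h: "a \<in> hom C Z X" "b \<in> hom C Z X" "c \<in> hom C Z X" "d \<in> hom C Z X" "e \<in> hom C Z X"
  shows "mal a (mal b c d) e = mal a d (mal c b e)"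
proof -
  define m where "m = mal b c d"
  have m: "m \<in> hom C Z X" unfolding m_def using mal_in_hom[OF h(2-4)] .
  have cbe: "mal c b e \<in> hom C Z X" using mal_in_hom[OF h(3,2,5)] .
  have "mal m a (mal a d (mal c b e)) = mal m d (mal c b e)"
    using mal_assoc[OF m h(1,1,4) cbe] mal_right_cancel[OF m h(1)] by simp
  also have "\<dots> = e"
    unfolding m_def using mal_assoc[OF h(2-4,4) cbe] mal_left_cancel[OF cbe h(4)] mal_shift[OF h(2,3,5)]
    by simp
  finally have "mal a m e = mal a m (mal m a (mal a d (mal c b e)))" by simp
  also have "\<dots> = mal a d (mal c b e)" using mal_shift[OF h(1) m mal_in_hom[OF h(1,4) cbe]] .
  finally show ?thesis unfolding m_def .
qed

lemma mal_recover_third: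
  assumes "x \<in> hom C Z X" "y \<in> hom C Z X" "z \<in> hom C Z X"
  shows "mal x (mal y z x) y = z"
  using mal_middle[OF assms(1,2,3,1,2)] mal_left_cancel[OF mal_in_hom[OF assms(3,2,2)] assms(1)]
    mal_right_cancel[OF assms(3,2)] by simp

lemma mal_recover_second:
  assumes "x \<in> hom C Z X" "y \<in> hom C Z X" "z \<in> hom C Z X"
  shows "mal (mal y z x) x z = y"
  using mal_assoc[OF assms(2,3,1,1,3)] mal_left_cancel[OF assms(3,1)] mal_right_cancel[OF assms(2,3)]
  by simp

lemma tpairing_comp_eq_iff:
  assumes "a \<in> hom C Q X" "b \<in> hom C Q X" "c \<in> hom C Q X" "u \<in> hom C Z Q" "v \<in> hom C Z Q"
  shows "Comp C (tp a b c) u = Comp C (tp a b c) v \<longleftrightarrow>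
    Comp C a u = Comp C a v \<and> Comp C b u = Comp C b v \<and> Comp C c u = Comp C c v"
  using tpairing_comp[OF assms(4,1-3)] tpairing_comp[OF assms(5,1-3)]
    tpairing_eq_iff[OF Comp_in_hom[OF category assms(4) assms(1)] Comp_in_hom[OF category assms(4) assms(2)]
      Comp_in_hom[OF category assms(4) assms(3)] Comp_in_hom[OF category assms(5) assms(1)]
      Comp_in_hom[OF category assms(5) assms(2)] Comp_in_hom[OF category assms(5) assms(3)]]
  by simp

text \<open>
  Each of these maps repeats \<open>q1\<close> only to stay an endomorphism of \<open>X\<^sup>3\<close>: no product \<open>X\<^sup>2\<close>
  is at hand, and only the kernels of the maps matter.
\<close>

definition keep12 where "keep12 = tp q1 q2 q1"
definition keep13 where "keep13 = tp q1 q1 q3"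
definition keep1 where "keep1 = tp q1 q1 q1"
definition twist where "twist = tp q1 (mal q2 q3 q1) q1"

lemma mal_q2_q3_q1_in_hom: "mal q2 q3 q1 \<in> hom C Q X"
  using mal_in_hom projections_in_hom by blast

lemma kernel_le_keep1:
  assumes "b \<in> hom C Q X" "c \<in> hom C Q X"
  shows "kernel_le C Q (tp q1 b c) keep1"
  unfolding kernel_le_def keep1_def
  using tpairing_comp_eq_iff[OF projections_in_hom(1) assms] tpairing_comp_eq_iff[OF projections_in_hom(1,1,1)]
  by blast

lemma kernel_le_relcomp_keep1: "kernel_le_relcomp C Q keep1 keep12 keep13"
  unfolding kernel_le_relcomp_def
proof (intro allI impI)
  fix Z x y assume xy: "x \<in> hom C Z Q" "y \<in> hom C Z Q" "Comp C keep1 x = Comp C keep1 y"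
  note q = projections_in_hom
  define c where "c = tp (Comp C q1 x) (Comp C q2 x) (Comp C q3 y)"
  note c = tpairing[OF projections_comp_in_hom(1,2)[OF xy(1)] projections_comp_in_hom(3)[OF xy(2)],
      folded c_def]
  have "Comp C q1 x = Comp C q1 y"
    using xy unfolding keep1_def tpairing_comp_eq_iff[OF q(1,1,1) xy(1,2)] by blast
  then show "\<exists>c\<in>hom C Z Q. Comp C keep12 x = Comp C keep12 c \<and> Comp C keep13 c = Comp C keep13 y"
    using c unfolding keep12_def keep13_def
    by (intro bexI[of _ c]) (simp_all add: tpairing_comp_eq_iff[OF q(1,2,1) xy(1)]
        tpairing_comp_eq_iff[OF q(1,1,3) _ xy(2)])
qed

lemma jointly_monic_keep12_twist: "jointly_monic C Q keep12 twist"
  unfolding jointly_monic_def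
proof (intro allI impI)
  fix Z u v assume uv: "u \<in> hom C Z Q" "v \<in> hom C Z Q" "Comp C keep12 u = Comp C keep12 v"
    "Comp C twist u = Comp C twist v"
  note q = projections_in_hom and U = projections_comp_in_hom[OF uv(1)] and V = projections_comp_in_hom[OF uv(2)]
  have 1: "Comp C q1 u = Comp C q1 v" and 2: "Comp C q2 u = Comp C q2 v"
    and "Comp C (mal q2 q3 q1) u = Comp C (mal q2 q3 q1) v"
    using uv unfolding keep12_def twist_def tpairing_comp_eq_iff[OF q(1,2,1) uv(1,2)]
      tpairing_comp_eq_iff[OF q(1) mal_q2_q3_q1_in_hom q(1) uv(1,2)] by simp_all
  then have "Comp C q3 u = Comp C q3 v"
    using mal_comp[OF uv(1) q(2,3,1)] mal_comp[OF uv(2) q(2,3,1)]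
      mal_recover_third[OF U(1-3)] mal_recover_third[OF V(1-3)] by metis
  with 1 2 show "u = v" using tpairing_ext[OF uv(1,2)] by blast
qed

lemma jointly_monic_keep13_twist: "jointly_monic C Q keep13 twist"
  unfolding jointly_monic_def
proof (intro allI impI)
  fix Z u v assume uv: "u \<in> hom C Z Q" "v \<in> hom C Z Q" "Comp C keep13 u = Comp C keep13 v"
    "Comp C twist u = Comp C twist v"
  note q = projections_in_hom and U = projections_comp_in_hom[OF uv(1)] and V = projections_comp_in_hom[OF uv(2)]
  have 1: "Comp C q1 u = Comp C q1 v" and 3: "Comp C q3 u = Comp C q3 v"
    and "Comp C (mal q2 q3 q1) u = Comp C (mal q2 q3 q1) v"
    using uv unfolding keep13_def twist_def tpairing_comp_eq_iff[OF q(1,1,3) uv(1,2)]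
      tpairing_comp_eq_iff[OF q(1) mal_q2_q3_q1_in_hom q(1) uv(1,2)] by simp_all
  then have "Comp C q2 u = Comp C q2 v"
    using mal_comp[OF uv(1) q(2,3,1)] mal_comp[OF uv(2) q(2,3,1)]
      mal_recover_second[OF U(1-3)] mal_recover_second[OF V(1-3)] by metis
  with 1 3 show "u = v" using tpairing_ext[OF uv(1,2)] by blast
qed

lemma generalized_elements_unique:
  assumes wcd: "weakly_cong_distributive C" and ab: "a \<in> hom C Z X" "b \<in> hom C Z X"
  shows "a = b"
proof -
  note q = projections_in_hom
  have twist_comp: "Comp C twist (tp x y y) = tp x (mal y y x) x"
    if "x \<in> hom C Z X" "y \<in> hom C Z X" for x y
    unfolding twist_def
    using tpairing_comp[OF tpairing(1)[OF that(1,2,2)] q(1) mal_q2_q3_q1_in_hom q(1)]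
      mal_comp[OF tpairing(1)[OF that(1,2,2)] q(2,3,1)] tpairing[OF that(1,2,2)] by simp
  have "Comp C twist (tp a a a) = Comp C twist (tp a b b)"
    using twist_comp[OF ab(1,1)] twist_comp[OF ab] mal_left_cancel[OF ab(1,1)] mal_left_cancel[OF ab]
    by simp
  then have "tp a a a = tp a b b"
    using weakly_cong_distributive_monoI[OF wcd
        tpairing(1)[OF q(1,2,1)] tpairing(1)[OF q(1,1,3)] tpairing(1)[OF q(1) mal_q2_q3_q1_in_hom q(1)]
        tpairing(1)[OF q(1,1,1)],
        folded keep12_def keep13_def twist_def keep1_def,
        OF jointly_monic_keep12_twist jointly_monic_keep13_twist
        kernel_le_keep1[OF q(2,1), folded keep12_def] kernel_le_keep1[OF q(1,3), folded keep13_def]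
        kernel_le_keep1[OF mal_q2_q3_q1_in_hom q(1), folded twist_def] kernel_le_relcomp_keep1
        tpairing(1)[OF ab(1,1,1)] tpairing(1)[OF ab(1,2,2)]]
    by blast
  then show ?thesis using tpairing_eq_iff[OF ab(1,1,1) ab(1,2,2)] by blast
qed

end

lemma mono_bangI:
  assumes "category C" "terminal C T" "X \<in> Ob C"
    and "\<And>Z a b. a \<in> hom C Z X \<Longrightarrow> b \<in> hom C Z X \<Longrightarrow> a = b"
  shows "mono C (bang C T X)"
  using bang_in_hom[OF assms(2,3)] assms(4) unfolding mono_def by (auto simp: in_hom_iff)

lemma product_universal:
  assumes "product C x y P p1 p2" "Z \<in> Ob C" "a \<in> hom C Z x" "b \<in> hom C Z y"
  shows "\<exists>!u. u \<in> hom C Z P \<and> Comp C p1 u = a \<and> Comp C p2 u = b"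
  using assms unfolding product_def by blast

lemma product_pairing:
  assumes "category C" "product C x y P p1 p2" "a \<in> hom C Z x" "b \<in> hom C Z y"
  shows "pairing C P p1 p2 a b \<in> hom C Z P" "Comp C p1 (pairing C P p1 p2 a b) = a"
    "Comp C p2 (pairing C P p1 p2 a b) = b"
proof -
  have "Z \<in> Ob C" "Dom C a = Z" using hom_objects[OF assms(1,3)] assms(3) by (auto simp: in_hom_iff)
  from theI'[OF product_universal[OF assms(2) this(1) assms(3,4)]] this(2)
  show "pairing C P p1 p2 a b \<in> hom C Z P" "Comp C p1 (pairing C P p1 p2 a b) = a"
    "Comp C p2 (pairing C P p1 p2 a b) = b"
    unfolding pairing_def by auto
qed

lemma product_pairing_comp:
  assumes "category C" "product C x y P p1 p2" "h \<in> hom C Z' Z" "a \<in> hom C Z x" "b \<in> hom C Z y"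
  shows "Comp C (pairing C P p1 p2 a b) h = pairing C P p1 p2 (Comp C a h) (Comp C b h)"
proof -
  note u = product_pairing[OF assms(1,2,4,5)]
  have p: "p1 \<in> hom C P x" "p2 \<in> hom C P y" using assms(2) unfolding product_def by auto
  have ah: "Comp C a h \<in> hom C Z' x" "Comp C b h \<in> hom C Z' y"
    using Comp_in_hom[OF assms(1,3)] assms(4,5) by auto
  have "Z' \<in> Ob C" using hom_objects[OF assms(1,3)] by blast
  moreover have "Comp C (pairing C P p1 p2 a b) h \<in> hom C Z' P"
    "Comp C p1 (Comp C (pairing C P p1 p2 a b) h) = Comp C a h"
    "Comp C p2 (Comp C (pairing C P p1 p2 a b) h) = Comp C b h"
    using Comp_in_hom[OF assms(1,3) u(1)] Comp_assoc[OF assms(1,3) u(1) p(1)]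
      Comp_assoc[OF assms(1,3) u(1) p(2)] u by simp_all
  ultimately show ?thesis
    using product_universal[OF assms(2) _ ah] product_pairing[OF assms(1,2) ah] by blast
qed

abbreviation pt_arr :: "('o \<times> 'a \<times> 'a) \<times> ('o \<times> 'a \<times> 'a) \<times> 'a \<Rightarrow> 'a" where
  "pt_arr \<phi> \<equiv> snd (snd \<phi>)"

lemma Ob_pt_cat_iff:
  "(B, g, t) \<in> Ob (pt_cat C X) \<longleftrightarrow> B \<in> Ob C \<and> g \<in> hom C B X \<and> t \<in> hom C X B \<and> Comp C g t = Id C X"
  by (simp add: pt_cat_def)

lemma hom_pt_cat_iff:
  "\<phi> \<in> hom (pt_cat C X) a b \<longleftrightarrow> \<phi> = (a, b, pt_arr \<phi>) \<and> a \<in> Ob (pt_cat C X) \<and> b \<in> Ob (pt_cat C X) \<and>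
     pt_arr \<phi> \<in> hom C (fst a) (fst b) \<and> Comp C (fst (snd b)) (pt_arr \<phi>) = fst (snd a) \<and>
     Comp C (pt_arr \<phi>) (snd (snd a)) = snd (snd b)"
  by (cases \<phi>) (auto simp: pt_cat_def hom_def)

lemma Comp_pt_cat: "Comp (pt_cat C X) (b, c, k) (a, b', h) = (a, c, Comp C k h)"
  by (simp add: pt_cat_def)

locale internal_group_in_points =
  fixes C :: "('o,'a) cat" and X A f s T P p1 p2 m e i
  assumes category: "category C"
    and internal_group: "internal_group (pt_cat C X) (A, f, s) T P p1 p2 m e i"
begin

abbreviation PT where "PT \<equiv> pt_cat C X"
abbreviation G where "G \<equiv> (A, f, s)"

lemma PT_category: "category PT"
  and G_Ob: "G \<in> Ob PT"
  and product: "product PT G G P p1 p2"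
  and m_in_hom: "m \<in> hom PT P G"
  and i_in_hom: "i \<in> hom PT G G"
  using internal_group unfolding internal_group_def by blast+

lemma point: "A \<in> Ob C" "f \<in> hom C A X" "s \<in> hom C X A" "Comp C f s = Id C X"
  using G_Ob by (simp_all add: Ob_pt_cat_iff)

definition gmul where "gmul a b = Comp PT m (pairing PT P p1 p2 a b)"
definition gunit where "gunit Z = Comp PT e (bang PT T Z)"
definition ginv where "ginv a = Comp PT i a"

lemma gmul_in_hom: "a \<in> hom PT Z G \<Longrightarrow> b \<in> hom PT Z G \<Longrightarrow> gmul a b \<in> hom PT Z G"
  unfolding gmul_def using Comp_in_hom[OF PT_category product_pairing(1)[OF PT_category product] m_in_hom] .

lemma ginv_in_hom: "a \<in> hom PT Z G \<Longrightarrow> ginv a \<in> hom PT Z G"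
  unfolding ginv_def using Comp_in_hom[OF PT_category _ i_in_hom] .

lemma group_laws:
  assumes "x \<in> hom PT Z G" "y \<in> hom PT Z G" "z \<in> hom PT Z G"
  shows "gmul (gmul x y) z = gmul x (gmul y z)" "gmul (gunit Z) x = x" "gmul x (gunit Z) = x"
    "gmul x (ginv x) = gunit Z" "gmul (ginv x) x = gunit Z"
proof -
  have "Z \<in> Ob PT" using hom_objects[OF PT_category assms(1)] by blast
  with internal_group assms
  show "gmul (gmul x y) z = gmul x (gmul y z)" "gmul (gunit Z) x = x" "gmul x (gunit Z) = x"
    "gmul x (ginv x) = gunit Z" "gmul (ginv x) x = gunit Z"
    unfolding internal_group_def gmul_def gunit_def ginv_def Let_def by blast+
qed

lemma gmul_comp:
  assumes "h \<in> hom PT Z' Z" "a \<in> hom PT Z G" "b \<in> hom PT Z G"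
  shows "Comp PT (gmul a b) h = gmul (Comp PT a h) (Comp PT b h)"
  unfolding gmul_def
  using Comp_assoc[OF PT_category assms(1) product_pairing(1)[OF PT_category product assms(2,3)] m_in_hom]
    product_pairing_comp[OF PT_category product assms] by simp

lemma ginv_comp: "h \<in> hom PT Z' Z \<Longrightarrow> a \<in> hom PT Z G \<Longrightarrow> Comp PT (ginv a) h = ginv (Comp PT a h)"
  unfolding ginv_def using Comp_assoc[OF PT_category _ _ i_in_hom] by simp

end

locale internal_group_in_points_kernel_pair = internal_group_in_points +
  fixes W w1 w2
  assumes kernel_pair: "pullback C f f W w1 w2"
begin

lemma kernel_pair_in_hom: "W \<in> Ob C" "w1 \<in> hom C W A" "w2 \<in> hom C W A" "Comp C f w1 = Comp C f w2"
  using pullback_in_hom[OF kernel_pair point(2,2)] .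

abbreviation kp where "kp a b \<equiv> pairing C W w1 w2 a b"

lemma kp_pairing:
  assumes "a \<in> hom C Z A" "b \<in> hom C Z A" "Comp C f a = Comp C f b"
  shows "kp a b \<in> hom C Z W" "Comp C w1 (kp a b) = a" "Comp C w2 (kp a b) = b"
  using pullback_pairing[OF category kernel_pair point(2,2) assms] .

lemma kernel_pair_eqI:
  "u \<in> hom C Z W \<Longrightarrow> v \<in> hom C Z W \<Longrightarrow> Comp C w1 u = Comp C w1 v \<Longrightarrow> Comp C w2 u = Comp C w2 v \<Longrightarrow> u = v"
  using pullback_arrow_eqI[OF category kernel_pair point(2,2)] .

lemma jointly_monic_kernel_pair: "jointly_monic C W w1 w2" "jointly_monic C W w2 w1"
  unfolding jointly_monic_def using kernel_pair_eqI by blast+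

lemma kp_comp_eq:
  assumes "a \<in> hom C W A" "b \<in> hom C W A" "Comp C f a = Comp C f b"
    and "u \<in> hom C Z W" "v \<in> hom C Z W" "Comp C a u = Comp C a v" "Comp C b u = Comp C b v"
  shows "Comp C (kp a b) u = Comp C (kp a b) v"
proof (rule kernel_pair_eqI)
  note k = kp_pairing[OF assms(1-3)]
  show "Comp C (kp a b) u \<in> hom C Z W" "Comp C (kp a b) v \<in> hom C Z W"
    using Comp_in_hom[OF category assms(4) k(1)] Comp_in_hom[OF category assms(5) k(1)] .
  show "Comp C w1 (Comp C (kp a b) u) = Comp C w1 (Comp C (kp a b) v)"
    "Comp C w2 (Comp C (kp a b) u) = Comp C w2 (Comp C (kp a b) v)"
    using Comp_assoc[OF category assms(4) k(1)] Comp_assoc[OF category assms(5) k(1)]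
      kernel_pair_in_hom k assms(6,7) by simp_all
qed

lemma jointly_monic_via_kp:
  assumes "a \<in> hom C W A" "b \<in> hom C W A" "Comp C f a = Comp C f b" "N \<in> hom C W A"
    and "kernel_le C W d a" "jointly_monic C W b (Comp C N (kp a b))"
  shows "jointly_monic C W b d"
  unfolding jointly_monic_def
proof (intro allI impI)
  fix Z u v assume uv: "u \<in> hom C Z W" "v \<in> hom C Z W" "Comp C b u = Comp C b v" "Comp C d u = Comp C d v"
  then have "Comp C a u = Comp C a v" using assms(5) unfolding kernel_le_def by blast
  then have "Comp C (Comp C N (kp a b)) u = Comp C (Comp C N (kp a b)) v"
    using kp_comp_eq[OF assms(1-3) uv(1,2) _ uv(3)] Comp_assoc[OF category uv(1) kp_pairing(1)[OF assms(1-3)] assms(4)]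
      Comp_assoc[OF category uv(2) kp_pairing(1)[OF assms(1-3)] assms(4)] by simp
  then show "u = v" using assms(6) uv(1-3) unfolding jointly_monic_def by blast
qed

text \<open>
  \<open>Wpt\<close> is the kernel pair of \<open>f\<close> viewed as a point over \<open>X\<close>, i.e. the square of \<open>G\<close> in
  \<open>Pt\<^sub>X\<close>, with projections \<open>fst_pt\<close>, \<open>snd_pt\<close>; \<open>diff\<close> is the division \<open>(x, y) \<mapsto> x y\<^sup>-\<^sup>1\<close>.
\<close>

definition diagonal_section where "diagonal_section = kp s s"
definition base where "base = Comp C f w1"
definition Wpt where "Wpt = (W, base, diagonal_section)"
definition fst_pt where "fst_pt = (Wpt, G, w1)"
definition snd_pt where "snd_pt = (Wpt, G, w2)"

lemma diagonal_section: "diagonal_section \<in> hom C X W" "Comp C w1 diagonal_section = s"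
  "Comp C w2 diagonal_section = s"
  unfolding diagonal_section_def using kp_pairing[OF point(3,3) refl] .

lemma base_in_hom: "base \<in> hom C W X"
  unfolding base_def using Comp_in_hom[OF category kernel_pair_in_hom(2) point(2)] .

lemma base_eq: "base = Comp C f w2"
  unfolding base_def using kernel_pair_in_hom(4) .

lemma Wpt_Ob: "Wpt \<in> Ob PT"
proof -
  have "Comp C base diagonal_section = Id C X"
    unfolding base_def using Comp_assoc[OF category diagonal_section(1) kernel_pair_in_hom(2) point(2)]
      diagonal_section point(4) by simp
  then show ?thesis
    unfolding Wpt_def Ob_pt_cat_iff using kernel_pair_in_hom(1) base_in_hom diagonal_section(1) by blast
qed

lemma hom_Wpt_G_iff:
  "\<alpha> \<in> hom PT Wpt G \<longleftrightarrow> \<alpha> = (Wpt, G, pt_arr \<alpha>) \<and> pt_arr \<alpha> \<in> hom C W A \<and>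
     Comp C f (pt_arr \<alpha>) = base \<and> Comp C (pt_arr \<alpha>) diagonal_section = s"
  using Wpt_Ob G_Ob unfolding hom_pt_cat_iff by (auto simp: Wpt_def)

lemma fst_pt_in_hom: "fst_pt \<in> hom PT Wpt G"
  unfolding hom_Wpt_G_iff fst_pt_def using kernel_pair_in_hom(2) diagonal_section(2) base_def by simp

lemma snd_pt_in_hom: "snd_pt \<in> hom PT Wpt G"
  unfolding hom_Wpt_G_iff snd_pt_def using kernel_pair_in_hom(3) diagonal_section(3) base_eq by simp

text \<open>
  The pair \<open>(\<alpha>, \<beta>)\<close> is the pair of projections precomposed with the endomorphism \<open>k\<close> of \<open>Wpt\<close>,
  so the product is computed by one arrow; this transfers group identities to arrows out of \<open>W\<close>
  in \<open>C\<close>, which are not morphisms of \<open>Pt\<^sub>X\<close>.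
\<close>

lemma gmul_arr:
  assumes \<alpha>: "\<alpha> \<in> hom PT Wpt G" and \<beta>: "\<beta> \<in> hom PT Wpt G" and k: "k \<in> hom C W W"
    and k1: "Comp C w1 k = pt_arr \<alpha>" and k2: "Comp C w2 k = pt_arr \<beta>"
  shows "pt_arr (gmul \<alpha> \<beta>) = Comp C (pt_arr (gmul fst_pt snd_pt)) k"
proof -
  have "Comp C base k = Comp C f (Comp C w1 k)"
    unfolding base_def using Comp_assoc[OF category k kernel_pair_in_hom(2) point(2)] by simp
  also have "\<dots> = base" using k1 \<alpha> unfolding hom_Wpt_G_iff by simp
  finally have "Comp C base k = base" .
  moreover have "Comp C k diagonal_section = diagonal_section"
  proof (rule kernel_pair_eqI[OF Comp_in_hom[OF category diagonal_section(1) k] diagonal_section(1)])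
    show "Comp C w1 (Comp C k diagonal_section) = Comp C w1 diagonal_section"
      using Comp_assoc[OF category diagonal_section(1) k kernel_pair_in_hom(2)] k1 \<alpha> diagonal_section(2)
      unfolding hom_Wpt_G_iff by simp
    show "Comp C w2 (Comp C k diagonal_section) = Comp C w2 diagonal_section"
      using Comp_assoc[OF category diagonal_section(1) k kernel_pair_in_hom(3)] k2 \<beta> diagonal_section(3)
      unfolding hom_Wpt_G_iff by simp
  qed
  ultimately have \<kappa>: "(Wpt, Wpt, k) \<in> hom PT Wpt Wpt"
    using Wpt_Ob k unfolding hom_pt_cat_iff by (simp add: Wpt_def)
  have "Comp PT fst_pt (Wpt, Wpt, k) = \<alpha>" "Comp PT snd_pt (Wpt, Wpt, k) = \<beta>"
    using \<alpha> \<beta> k1 k2 unfolding fst_pt_def snd_pt_def Comp_pt_cat hom_Wpt_G_iff by auto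
  then have "gmul \<alpha> \<beta> = Comp PT (gmul fst_pt snd_pt) (Wpt, Wpt, k)"
    using gmul_comp[OF \<kappa> fst_pt_in_hom snd_pt_in_hom] by simp
  moreover have "gmul fst_pt snd_pt = (Wpt, G, pt_arr (gmul fst_pt snd_pt))"
    using gmul_in_hom[OF fst_pt_in_hom snd_pt_in_hom] unfolding hom_Wpt_G_iff by blast
  ultimately show ?thesis by (metis Comp_pt_cat snd_conv)
qed

definition diff where "diff = gmul fst_pt (ginv snd_pt)"

lemma diff_in_hom: "diff \<in> hom PT Wpt G"
  unfolding diff_def using gmul_in_hom[OF fst_pt_in_hom ginv_in_hom[OF snd_pt_in_hom]] .

lemma diff_arr: "pt_arr diff \<in> hom C W A" "Comp C f (pt_arr diff) = base"
  using diff_in_hom unfolding hom_Wpt_G_iff by blast+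

lemma gmul_diff_snd_pt: "gmul diff snd_pt = fst_pt"
  using group_laws(1)[OF fst_pt_in_hom ginv_in_hom[OF snd_pt_in_hom] snd_pt_in_hom]
    group_laws(5)[OF snd_pt_in_hom snd_pt_in_hom snd_pt_in_hom] group_laws(3)[OF fst_pt_in_hom fst_pt_in_hom fst_pt_in_hom]
  unfolding diff_def by simp

lemma gmul_inv_diff_fst_pt: "gmul (ginv diff) fst_pt = snd_pt"
  using gmul_diff_snd_pt group_laws(1)[OF ginv_in_hom[OF diff_in_hom] diff_in_hom snd_pt_in_hom]
    group_laws(5)[OF diff_in_hom diff_in_hom diff_in_hom] group_laws(2)[OF snd_pt_in_hom snd_pt_in_hom snd_pt_in_hom]
  by simp

lemma jointly_monic_w1_diff: "jointly_monic C W w1 (pt_arr diff)"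
proof -
  have inv_diff: "pt_arr (ginv diff) \<in> hom C W A" "Comp C f (pt_arr (ginv diff)) = base"
    using ginv_in_hom[OF diff_in_hom] unfolding hom_Wpt_G_iff by blast+
  have i: "i = (G, G, pt_arr i)" "pt_arr i \<in> hom C A A"
    using i_in_hom unfolding hom_pt_cat_iff by auto
  have "pt_arr (ginv diff) = Comp C (pt_arr i) (pt_arr diff)"
    using diff_in_hom i(1) unfolding ginv_def hom_Wpt_G_iff by (metis Comp_pt_cat snd_conv)
  then have le: "kernel_le C W (pt_arr diff) (pt_arr (ginv diff))"
    using kernel_le_Comp[OF category diff_arr(1) i(2)] by simp
  note k = kp_pairing[OF inv_diff(1) kernel_pair_in_hom(2)]
  have "w2 = Comp C (pt_arr (gmul fst_pt snd_pt)) (kp (pt_arr (ginv diff)) w1)"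
    using gmul_arr[OF ginv_in_hom[OF diff_in_hom] fst_pt_in_hom k(1)] k inv_diff base_def
    unfolding gmul_inv_diff_fst_pt by (simp add: fst_pt_def snd_pt_def)
  with le show ?thesis
    using jointly_monic_via_kp[OF inv_diff(1) kernel_pair_in_hom(2)]
      gmul_in_hom[OF fst_pt_in_hom snd_pt_in_hom, unfolded hom_Wpt_G_iff] inv_diff(2) base_def
      jointly_monic_kernel_pair(1) by auto
qed

lemma jointly_monic_w2_diff: "jointly_monic C W w2 (pt_arr diff)"
proof -
  note k = kp_pairing[OF diff_arr(1) kernel_pair_in_hom(3)]
  have "w1 = Comp C (pt_arr (gmul fst_pt snd_pt)) (kp (pt_arr diff) w2)"
    using gmul_arr[OF diff_in_hom snd_pt_in_hom k(1)] k diff_arr base_eq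
    unfolding gmul_diff_snd_pt by (simp add: fst_pt_def snd_pt_def)
  moreover have "kernel_le C W (pt_arr diff) (pt_arr diff)" unfolding kernel_le_def by blast
  ultimately show ?thesis
    using jointly_monic_via_kp[OF diff_arr(1) kernel_pair_in_hom(3)]
      gmul_in_hom[OF fst_pt_in_hom snd_pt_in_hom, unfolded hom_Wpt_G_iff] diff_arr(2) base_eq
      jointly_monic_kernel_pair(2) by auto
qed

lemma kernel_le_relcomp_base: "kernel_le_relcomp C W base w1 w2"
  unfolding kernel_le_relcomp_def
proof (intro allI impI)
  fix Z x y assume xy: "x \<in> hom C Z W" "y \<in> hom C Z W" "Comp C base x = Comp C base y"
  note w = kernel_pair_in_hom
  have "Comp C f (Comp C w1 x) = Comp C f (Comp C w2 y)"
    using xy(3) Comp_assoc[OF category xy(1) w(2) point(2)] Comp_assoc[OF category xy(2) w(3) point(2)]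
    unfolding base_def w(4) by simp
  note c = kp_pairing[OF Comp_in_hom[OF category xy(1) w(2)] Comp_in_hom[OF category xy(2) w(3)] this]
  show "\<exists>c\<in>hom C Z W. Comp C w1 x = Comp C w1 c \<and> Comp C w2 c = Comp C w2 y"
    using c by metis
qed

lemma diff_arr_mono:
  assumes "weakly_cong_distributive C"
    and "u \<in> hom C Z W" "v \<in> hom C Z W" "Comp C (pt_arr diff) u = Comp C (pt_arr diff) v"
  shows "u = v"
  using weakly_cong_distributive_monoI[OF assms(1) kernel_pair_in_hom(2,3) diff_arr(1) base_in_hom
      jointly_monic_w1_diff jointly_monic_w2_diff
      kernel_le_Comp[OF category kernel_pair_in_hom(2) point(2), folded base_def]
      kernel_le_Comp[OF category kernel_pair_in_hom(3) point(2), folded base_eq]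
      kernel_le_Comp[OF category diff_arr(1) point(2), unfolded diff_arr(2)]
      kernel_le_relcomp_base assms(2-4)] .

lemma diff_comp_eq_unit:
  assumes "\<phi> \<in> hom PT Z Wpt" "Comp PT fst_pt \<phi> = Comp PT snd_pt \<phi>"
  shows "Comp PT diff \<phi> = gunit Z"
proof -
  have x: "Comp PT fst_pt \<phi> \<in> hom PT Z G" using Comp_in_hom[OF PT_category assms(1) fst_pt_in_hom] .
  show ?thesis
    unfolding diff_def
    using gmul_comp[OF assms(1) fst_pt_in_hom ginv_in_hom[OF snd_pt_in_hom]] ginv_comp[OF assms(1) snd_pt_in_hom]
      group_laws(4)[OF x x x] assms(2)
    by simp
qed

lemma diff_arr_comp_diagonal:
  assumes "h \<in> hom C A W" "Comp C w1 h = Comp C w2 h" "Comp C base h = f" "Comp C h s = diagonal_section"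
  shows "Comp C (pt_arr diff) h = pt_arr (gunit G)"
proof -
  have "(G, Wpt, h) \<in> hom PT G Wpt" "Comp PT fst_pt (G, Wpt, h) = Comp PT snd_pt (G, Wpt, h)"
    using assms G_Ob Wpt_Ob unfolding hom_pt_cat_iff by (simp_all add: Wpt_def fst_pt_def snd_pt_def Comp_pt_cat)
  from diff_comp_eq_unit[OF this] show ?thesis
    using diff_in_hom unfolding hom_Wpt_G_iff by (metis Comp_pt_cat snd_conv)
qed

lemma Comp_s_f_eq_Id:
  assumes wcd: "weakly_cong_distributive C"
  shows "Comp C s f = Id C A"
proof -
  note w = kernel_pair_in_hom and a = point and \<sigma> = diagonal_section
  have IdA: "Id C A \<in> hom C A A" using Id_in_hom[OF category a(1)] .
  define \<delta> where "\<delta> = kp (Id C A) (Id C A)"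
  define \<epsilon> where "\<epsilon> = Comp C diagonal_section f"
  have \<delta>: "\<delta> \<in> hom C A W" "Comp C w1 \<delta> = Id C A" "Comp C w2 \<delta> = Id C A"
    unfolding \<delta>_def using kp_pairing[OF IdA IdA refl] .
  have \<epsilon>: "\<epsilon> \<in> hom C A W" "Comp C w1 \<epsilon> = Comp C s f" "Comp C w2 \<epsilon> = Comp C s f"
    unfolding \<epsilon>_def using Comp_in_hom[OF category a(2) \<sigma>(1)] \<sigma>
      Comp_assoc[OF category a(2) \<sigma>(1) w(2)] Comp_assoc[OF category a(2) \<sigma>(1) w(3)]
    by simp_all
  have "Comp C base \<delta> = f"
    unfolding base_def using Comp_assoc[OF category \<delta>(1) w(2) a(2)] \<delta>(2) Comp_Id_right[OF category a(2)]
    by simp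
  moreover have "Comp C \<delta> s = diagonal_section"
    using kernel_pair_eqI[OF Comp_in_hom[OF category a(3) \<delta>(1)] \<sigma>(1)]
      Comp_assoc[OF category a(3) \<delta>(1) w(2)] Comp_assoc[OF category a(3) \<delta>(1) w(3)]
      \<delta> \<sigma> Comp_Id_left[OF category a(3)] by simp
  moreover have "Comp C base \<epsilon> = f"
    unfolding \<epsilon>_def using Comp_assoc[OF category a(2) \<sigma>(1) base_in_hom] Wpt_Ob
      Comp_Id_left[OF category a(2)] unfolding Wpt_def Ob_pt_cat_iff by simp
  moreover have "Comp C \<epsilon> s = diagonal_section"
    unfolding \<epsilon>_def using Comp_assoc[OF category a(3,2) \<sigma>(1)] a(4) Comp_Id_right[OF category \<sigma>(1)]
    by simp
  ultimately have "Comp C (pt_arr diff) \<delta> = Comp C (pt_arr diff) \<epsilon>"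
    using diff_arr_comp_diagonal[OF \<delta>(1)] diff_arr_comp_diagonal[OF \<epsilon>(1)] \<delta>(2,3) \<epsilon>(2,3) by simp
  then have "\<delta> = \<epsilon>" using diff_arr_mono[OF wcd \<delta>(1) \<epsilon>(1)] by blast
  then show ?thesis using \<delta>(2) \<epsilon>(2) by simp
qed

end

lemma (in internal_group_in_points) iso_of_weakly_cong_distributive:
  assumes wcd: "weakly_cong_distributive C"
  shows "iso C f"
proof -
  obtain W w1 w2 where "pullback C f f W w1 w2"
    using pullback_exists[OF weakly_cong_distributive_finitely_complete[OF wcd] point(2,2)] by blast
  then have "internal_group_in_points_kernel_pair C X A f s T P p1 p2 m e i W w1 w2"
    by (intro internal_group_in_points_kernel_pair.intro internal_group_in_points_axioms
        internal_group_in_points_kernel_pair_axioms.intro)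
  from internal_group_in_points_kernel_pair.Comp_s_f_eq_Id[OF this wcd] show ?thesis
    unfolding iso_def using point(2-4) by (auto simp: in_hom_iff)
qed

corollary internal_group_in_points_iso:
  assumes "weakly_cong_distributive C" "internal_group (pt_cat C X) (A, f, s) T P p1 p2 m e i"
  shows "iso C f"
  using internal_group_in_points.iso_of_weakly_cong_distributive[OF internal_group_in_points.intro assms(1)]
    weakly_cong_distributive_category[OF assms(1)] assms(2) .

corollary assoc_maltsev_subterminal:
  assumes "weakly_cong_distributive C" "X \<in> Ob C" "assoc_maltsev C X Q q1 q2 q3 p" "terminal C T"
  shows "mono C (bang C T X)"
proof (rule mono_bangI[OF weakly_cong_distributive_category[OF assms(1)] assms(4,2)])
  show "a = b" if "a \<in> hom C Z X" "b \<in> hom C Z X" for Z a b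
    using assoc_maltsev_object.generalized_elements_unique[OF assoc_maltsev_object.intro assms(1) that]
      weakly_cong_distributive_category[OF assms(1)] assms(3) .
qed

theorem mainTheorem11:
  fixes C :: "('o,'a) cat"
  assumes "weakly_cong_distributive C"
  shows "(\<forall>X\<in>Ob C. \<forall>A f s T P p1 p2 m e i.
            internal_group (pt_cat C X) (A,f,s) T P p1 p2 m e i \<longrightarrow> iso C f)
       \<and> (\<forall>X\<in>Ob C. \<forall>Q q1 q2 q3 p. assoc_maltsev C X Q q1 q2 q3 p \<longrightarrow>
            (\<forall>T. terminal C T \<longrightarrow> mono C (bang C T X)))"
proof (intro conjI ballI allI impI)
  fix X A f s T P p1 p2 m e i
  assume "internal_group (pt_cat C X) (A, f, s) T P p1 p2 m e i"
  then show "iso C f" by (rule internal_group_in_points_iso[OF assms])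
next
  fix X Q q1 q2 q3 p T
  assume "X \<in> Ob C" "assoc_maltsev C X Q q1 q2 q3 p" "terminal C T"
  then show "mono C (bang C T X)" by (rule assoc_maltsev_subterminal[OF assms])
qed

end
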